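(* Suppose the p-values are conditionally super-uniform: for every $t$ with $\theta_t=0$, $\mathbb{P}(p_t\le U\mid\mathcal{F}_{t-1})\le U$ a.s. for every $\mathcal F_{t-1}$-measurable $[0,1]$-valued $U$. Fix $d\in(0,1]$. (a) If the $\mathcal{F}_{t-1}$-measurable testing levels satisfy, a.s. for every $t\ge1$, $\sum_{j=1}^t\frac{\alpha_j}{dR^{\mathrm d}_{j-1}+1}\le\alpha$, then $\mathrm{mem\text{-}FDR}(t)\le\alpha$ for all $t$. (b) Let $(\lambda_t)_{t\ge1}$ be $(0,1)$-valued with each $\lambda_t$ $\mathcal{F}_{t-1}$-measurable, and let $\mathrm{mem\text{-}}\widehat{\mathrm{FDP}}^{\mathrm{pS\text{-}RAI}}(t):=\sum_{j=1}^t\frac{\alpha_j}{dR^{\mathrm d}_{j-1}+1}\cdot\frac{\mathbb{1}\{p_j>\lambda_j\}}{1-\lambda_j}$. Then (i) $\mathbb{E}[\mathrm{mem\text{-}}\widehat{\mathrm{FDP}}^{\mathrm{pS\text{-}RAI}}(t)]\ge\mathbb{E}[\mathrm{mem\text{-}FDP}^*(t)]$ for all $t$, where $\mathrm{mem\text{-}FDP}^*(t)=\sum_{j\in\mathcal{H}_0(t)}\alpha_j/(dR^{\mathrm d}_{j-1}+1)$; and (ii) if the testing levels satisfy $\mathrm{mem\text{-}}\widehat{\mathrm{FDP}}^{\mathrm{pS\text{-}RAI}}(t)\le\alpha$ a.s. for every $t$, then $\mathrm{mem\text{-}FDR}(t)\le\alpha$ for all $t$.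
   Context: Let $\alpha\in(0,1)$ be a target level. Hypotheses are indexed by $t=1,2,\dots$; $\theta_t\in\{0,1\}$ is a fixed (non-random) indicator with $\theta_t=0$ iff the $t$-th null hypothesis is true. $p_1,p_2,\dots$ are $[0,1]$-valued random variables (p-values). Testing levels $\alpha_1,\alpha_2,\dots$ are $[0,1]$-valued random variables and the decisions are $\delta_t=\mathbb{1}\{p_t\le\alpha_t\}$. Let $\mathcal{F}_t=\sigma(\delta_1,\dots,\delta_t)$, $\mathcal{F}_0$ trivial; each $\alpha_t$ is required to be $\mathcal{F}_{t-1}$-measurable. $\mathcal{H}_0(t)=\{j\le t:\theta_j=0\}$. For a decay parameter $d\in(0,1]$, $R^{\mathrm d}_t=\sum_{j=1}^t d^{t-j}\delta_j$ with $R^{\mathrm d}_0=0$, and $\mathrm{mem\text{-}FDR}(t)=\mathbb{E}\big[\sum_{j\in\mathcal{H}_0(t)}d^{t-j}\delta_j\big/R^{\mathrm d}_t\big]$ with the convention $0/0=0$. *)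

theory Defs
  imports "HOL-Probability.Probability"
begin

definition rej :: "(nat \<Rightarrow> 'a \<Rightarrow> real) \<Rightarrow> (nat \<Rightarrow> 'a \<Rightarrow> real) \<Rightarrow> nat \<Rightarrow> 'a \<Rightarrow> real" where
  "rej p a j \<omega> = (if p j \<omega> \<le> a j \<omega> then 1 else 0)"

definition filt :: "'a measure \<Rightarrow> (nat \<Rightarrow> 'a \<Rightarrow> real) \<Rightarrow> (nat \<Rightarrow> 'a \<Rightarrow> real) \<Rightarrow> nat \<Rightarrow> 'a measure" where
  "filt M p a t = sigma (space M)
     (\<Union>j\<in>{1..t}. {rej p a j -` B \<inter> space M | B. B \<in> sets borel})"

definition memR :: "real \<Rightarrow> (nat \<Rightarrow> 'a \<Rightarrow> real) \<Rightarrow> (nat \<Rightarrow> 'a \<Rightarrow> real) \<Rightarrow> nat \<Rightarrow> 'a \<Rightarrow> real" where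
  "memR d p a t \<omega> = (\<Sum>j=1..t. d ^ (t - j) * rej p a j \<omega>)"

definition H0 :: "(nat \<Rightarrow> nat) \<Rightarrow> nat \<Rightarrow> nat set" where
  "H0 \<theta> t = {j \<in> {1..t}. \<theta> j = 0}"

text \<open>mem-FDR(t); division by zero is 0 in Isabelle, matching 0/0 = 0.\<close>
definition memFDR :: "'a measure \<Rightarrow> real \<Rightarrow> (nat \<Rightarrow> nat) \<Rightarrow> (nat \<Rightarrow> 'a \<Rightarrow> real) \<Rightarrow> (nat \<Rightarrow> 'a \<Rightarrow> real) \<Rightarrow> nat \<Rightarrow> real" where
  "memFDR M d \<theta> p a t =
     integral\<^sup>L M (\<lambda>\<omega>. (\<Sum>j\<in>H0 \<theta> t. d ^ (t - j) * rej p a j \<omega>) / memR d p a t \<omega>)"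

definition memFDPstar :: "real \<Rightarrow> (nat \<Rightarrow> nat) \<Rightarrow> (nat \<Rightarrow> 'a \<Rightarrow> real) \<Rightarrow> (nat \<Rightarrow> 'a \<Rightarrow> real) \<Rightarrow> nat \<Rightarrow> 'a \<Rightarrow> real" where
  "memFDPstar d \<theta> p a t \<omega> = (\<Sum>j\<in>H0 \<theta> t. a j \<omega> / (d * memR d p a (j - 1) \<omega> + 1))"

definition memFDPhat :: "real \<Rightarrow> (nat \<Rightarrow> 'a \<Rightarrow> real) \<Rightarrow> (nat \<Rightarrow> 'a \<Rightarrow> real) \<Rightarrow> (nat \<Rightarrow> 'a \<Rightarrow> real) \<Rightarrow> nat \<Rightarrow> 'a \<Rightarrow> real" where
  "memFDPhat d p a lam t \<omega> = (\<Sum>j=1..t. a j \<omega> / (d * memR d p a (j - 1) \<omega> + 1)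
        * (if p j \<omega> > lam j \<omega> then 1 else 0) / (1 - lam j \<omega>))"

end

theory Submission
  imports Defs
begin

text \<open>A false rejection \<open>j \<le> t\<close> adds \<open>d ^ (t - j) * (d * R\<^sub>j\<^sub>-\<^sub>1 + 1)\<close> to \<open>R\<^sub>t\<close>, so its share
  \<open>d ^ (t - j) / R\<^sub>t\<close> of the mem-FDP is at most \<open>1 / (d * R\<^sub>j\<^sub>-\<^sub>1 + 1)\<close>. This weight is
  \<open>F\<^sub>j\<^sub>-\<^sub>1\<close>-measurable, so super-uniformity with \<open>U = \<alpha>\<^sub>j\<close> replaces \<open>\<delta>\<^sub>j\<close> by \<open>\<alpha>\<^sub>j\<close> in
  expectation: mem-FDR(t) \<open>\<le>\<close> E[mem-FDP*(t)], which gives (a). For (b), super-uniformity with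
  \<open>U = \<lambda>\<^sub>j\<close> gives \<open>P(p\<^sub>j > \<lambda>\<^sub>j | F\<^sub>j\<^sub>-\<^sub>1) \<ge> 1 - \<lambda>\<^sub>j\<close>, which cancels the factor
  \<open>1 / (1 - \<lambda>\<^sub>j)\<close> of each null term of the estimator in expectation.\<close>

lemma space_filt [simp]: "space (filt M p a t) = space M"
  unfolding filt_def by (rule space_measure_of) auto

lemma sets_filt: "sets (filt M p a t) = sigma_sets (space M)
     (\<Union>j\<in>{1..t}. {rej p a j -` B \<inter> space M | B. B \<in> sets borel})"
  unfolding filt_def by (rule sets_measure_of) auto

lemma rej_measurable_filt: "1 \<le> j \<Longrightarrow> j \<le> t \<Longrightarrow> rej p a j \<in> borel_measurable (filt M p a t)"
  unfolding measurable_def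
  by (auto simp: sets_filt intro!: sigma_sets.Basic) (metis atLeastAtMost_iff)

lemma memR_measurable_filt: "memR d p a t \<in> borel_measurable (filt M p a t)"
  unfolding memR_def by (intro borel_measurable_sum borel_measurable_times borel_measurable_const rej_measurable_filt) auto

lemma rej_measurable:
  assumes "p j \<in> borel_measurable M" "a j \<in> borel_measurable M"
  shows "rej p a j \<in> borel_measurable M"
  unfolding rej_def using assms by measurable

lemma sets_filt_subset:
  assumes p: "\<And>t. 1 \<le> t \<Longrightarrow> p t \<in> borel_measurable M"
    and a: "\<And>t. 1 \<le> t \<Longrightarrow> a t \<in> borel_measurable (filt M p a (t - 1))"
  shows "sets (filt M p a t) \<subseteq> sets M"
proof (induction t rule: less_induct)
  case (less t)
  have "rej p a j \<in> borel_measurable M" if "1 \<le> j" "j \<le> t" for j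
  proof (rule rej_measurable)
    show "p j \<in> borel_measurable M" using p that by auto
    have "sets (filt M p a (j - 1)) \<subseteq> sets M" using less that by auto
    then show "a j \<in> borel_measurable M"
      using a that measurable_mono[of borel borel "filt M p a (j - 1)" M] by auto
  qed
  then have "(\<Union>j\<in>{1..t}. {rej p a j -` B \<inter> space M | B. B \<in> sets borel}) \<subseteq> sets M"
    by (auto simp: measurable_def)
  then show ?case unfolding sets_filt by (simp add: sigma_sets_le_sets_iff)
qed

lemma rej_cases: "rej p a j \<omega> = 0 \<or> rej p a j \<omega> = 1"
  unfolding rej_def by auto

lemma rej_nonneg: "0 \<le> rej p a j \<omega>"
  unfolding rej_def by auto

lemma memR_Suc: "memR d p a (Suc n) \<omega> = d * memR d p a n \<omega> + rej p a (Suc n) \<omega>"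
proof -
  have "memR d p a (Suc n) \<omega> = (\<Sum>j=1..n. d ^ (Suc n - j) * rej p a j \<omega>) + rej p a (Suc n) \<omega>"
    unfolding memR_def by (simp add: sum.atLeast1_atMost_eq)
  also have "(\<Sum>j=1..n. d ^ (Suc n - j) * rej p a j \<omega>) = d * memR d p a n \<omega>"
    unfolding memR_def sum_distrib_left by (rule sum.cong) (auto simp: Suc_diff_le)
  finally show ?thesis .
qed

lemma memR_nonneg: "0 \<le> d \<Longrightarrow> 0 \<le> memR d p a t \<omega>"
  unfolding memR_def by (auto intro!: sum_nonneg simp: rej_nonneg)

lemma power_mult_memR_le: "0 \<le> d \<Longrightarrow> d ^ k * memR d p a j \<omega> \<le> memR d p a (j + k) \<omega>"
proof (induction k)
  case 0
  then show ?case by simp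
next
  case (Suc k)
  have "d ^ Suc k * memR d p a j \<omega> = d * (d ^ k * memR d p a j \<omega>)" by simp
  also have "\<dots> \<le> d * memR d p a (j + k) \<omega>" using Suc by (simp add: mult_left_mono)
  also have "\<dots> \<le> memR d p a (j + Suc k) \<omega>" by (simp add: memR_Suc rej_nonneg)
  finally show ?case .
qed

lemma memFDP_le_sum_rej_div:
  assumes "0 \<le> d"
  shows "(\<Sum>j\<in>H0 \<theta> t. d ^ (t - j) * rej p a j \<omega>) / memR d p a t \<omega>
     \<le> (\<Sum>j\<in>H0 \<theta> t. rej p a j \<omega> / (d * memR d p a (j - 1) \<omega> + 1))"
proof (cases "memR d p a t \<omega> = 0")
  case True
  then show ?thesis using assms
    by (auto intro!: sum_nonneg divide_nonneg_pos simp: rej_nonneg memR_nonneg add_nonneg_pos)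
next
  case False
  then have R_pos: "0 < memR d p a t \<omega>" using memR_nonneg[OF assms, of p a t \<omega>] by linarith
  have "(\<Sum>j\<in>H0 \<theta> t. d ^ (t - j) * rej p a j \<omega>) / memR d p a t \<omega>
     = (\<Sum>j\<in>H0 \<theta> t. d ^ (t - j) * rej p a j \<omega> / memR d p a t \<omega>)"
    by (simp add: sum_divide_distrib)
  also have "\<dots> \<le> (\<Sum>j\<in>H0 \<theta> t. rej p a j \<omega> / (d * memR d p a (j - 1) \<omega> + 1))"
  proof (rule sum_mono)
    fix j assume "j \<in> H0 \<theta> t"
    then obtain i where i: "j = Suc i" and "j \<le> t" unfolding H0_def by (cases j) auto
    have den_pos: "0 < d * memR d p a i \<omega> + 1"
      using assms memR_nonneg[OF assms, of p a i \<omega>] by (simp add: add_nonneg_pos)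
    have "d ^ (t - j) * memR d p a j \<omega> \<le> memR d p a t \<omega>"
      using power_mult_memR_le[OF assms, of "t - j" p a j \<omega>] \<open>j \<le> t\<close> by simp
    then have contribution: "d ^ (t - j) * (d * memR d p a i \<omega> + rej p a j \<omega>) \<le> memR d p a t \<omega>"
      using i by (simp add: memR_Suc)
    show "d ^ (t - j) * rej p a j \<omega> / memR d p a t \<omega> \<le> rej p a j \<omega> / (d * memR d p a (j - 1) \<omega> + 1)"
      using rej_cases[of p a j \<omega>]
    proof
      assume "rej p a j \<omega> = 1"
      then show ?thesis using contribution i R_pos den_pos by (simp add: divide_simps mult.commute)
    qed simp
  qed
  finally show ?thesis .
qed

context prob_space
begin

lemma nn_integral_le_const_of_AE_le:
  assumes "AE \<omega> in M. f \<omega> \<le> c"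
  shows "(\<integral>\<^sup>+\<omega>. ennreal (f \<omega>) \<partial>M) \<le> ennreal c"
proof -
  have "(\<integral>\<^sup>+\<omega>. ennreal (f \<omega>) \<partial>M) \<le> (\<integral>\<^sup>+\<omega>. ennreal c \<partial>M)"
    using assms by (intro nn_integral_mono_AE) (auto elim!: eventually_mono intro: ennreal_leI)
  then show ?thesis by (simp add: emeasure_space_1)
qed

lemma integrable_bounded_nonneg:
  fixes f :: "'a \<Rightarrow> real"
  assumes "f \<in> borel_measurable M" "\<And>\<omega>. \<omega> \<in> space M \<Longrightarrow> 0 \<le> f \<omega> \<and> f \<omega> \<le> B"
  shows "integrable M f"
  by (rule integrable_const_bound[where B=B]) (use assms in \<open>auto intro!: AE_I2\<close>)

lemma integral_mult_indicator_le_of_real_cond_exp_le: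
  assumes F: "subalgebra M F"
    and X: "X \<in> borel_measurable F" "\<And>\<omega>. \<omega> \<in> space M \<Longrightarrow> 0 \<le> X \<omega> \<and> X \<omega> \<le> 1"
    and U: "U \<in> borel_measurable F" "\<And>\<omega>. \<omega> \<in> space M \<Longrightarrow> 0 \<le> U \<omega> \<and> U \<omega> \<le> 1"
    and B: "B \<in> sets M"
    and cond_exp_le: "AE \<omega> in M. real_cond_exp M F (indicator B) \<omega> \<le> U \<omega>"
  shows "(\<integral>\<omega>. X \<omega> * indicator B \<omega> \<partial>M) \<le> (\<integral>\<omega>. X \<omega> * U \<omega> \<partial>M)"
proof -
  interpret finite_measure_subalgebra M F by unfold_locales (fact F)
  have XM: "X \<in> borel_measurable M" and UM: "U \<in> borel_measurable M"
    using X(1) U(1) measurable_from_subalg[OF F] by blast+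
  have int_B: "integrable M (\<lambda>\<omega>. X \<omega> * indicator B \<omega>)"
    by (rule integrable_const_bound[where B=1]) (use X B XM in \<open>auto simp: indicator_def\<close>)
  have int_U: "integrable M (\<lambda>\<omega>. X \<omega> * U \<omega>)"
    by (rule integrable_const_bound[where B=1]) (use X U XM UM in \<open>auto intro!: mult_le_one\<close>)
  have "(\<integral>\<omega>. X \<omega> * indicator B \<omega> \<partial>M) = (\<integral>\<omega>. X \<omega> * real_cond_exp M F (indicator B) \<omega> \<partial>M)"
    using real_cond_exp_intg(2)[OF int_B X(1)] B by simp
  also have "\<dots> \<le> (\<integral>\<omega>. X \<omega> * U \<omega> \<partial>M)"
  proof (rule integral_mono_AE)
    show "integrable M (\<lambda>\<omega>. X \<omega> * real_cond_exp M F (indicator B) \<omega>)"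
      using real_cond_exp_intg(1)[OF int_B X(1)] B by simp
    show "AE \<omega> in M. X \<omega> * real_cond_exp M F (indicator B) \<omega> \<le> X \<omega> * U \<omega>"
      using cond_exp_le X(2) by (auto intro!: mult_left_mono)
  qed (fact int_U)
  finally show ?thesis .
qed

lemma real_cond_exp_indicator_compl:
  assumes F: "subalgebra M F" and B: "B \<in> sets M"
  shows "AE \<omega> in M. real_cond_exp M F (indicator (space M - B)) \<omega> = 1 - real_cond_exp M F (indicator B) \<omega>"
proof -
  interpret finite_measure_subalgebra M F by unfold_locales (fact F)
  have int_1: "integrable M (\<lambda>_. 1::real)" by simp
  have int_B: "integrable M (indicator B :: 'a \<Rightarrow> real)"
    by (rule integrable_const_bound[where B=1]) (use B in \<open>auto simp: indicator_def\<close>)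
  have "AE \<omega> in M. real_cond_exp M F (indicator (space M - B)) \<omega> = real_cond_exp M F (\<lambda>x. 1 - indicator B x) \<omega>"
    by (rule real_cond_exp_cong) (use B in \<open>auto simp: indicator_def\<close>)
  moreover have "AE \<omega> in M. real_cond_exp M F (\<lambda>x. 1 - indicator B x) \<omega>
      = real_cond_exp M F (\<lambda>_. 1) \<omega> - real_cond_exp M F (indicator B) \<omega>"
    using real_cond_exp_diff[OF int_1 int_B] by simp
  moreover have "AE \<omega> in M. real_cond_exp M F (\<lambda>_. 1) \<omega> = (1::real)"
    using real_cond_exp_F_meas[OF int_1] by simp
  ultimately show ?thesis by eventually_elim simp
qed

lemma nn_integral_mult_le_of_le_real_cond_exp:
  assumes F: "subalgebra M F"
    and X: "X \<in> borel_measurable F"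
    and B: "B \<in> sets M"
    and le_cond_exp: "AE \<omega> in M. c \<omega> \<le> real_cond_exp M F (indicator B) \<omega>"
  shows "(\<integral>\<^sup>+\<omega>. ennreal (X \<omega>) * ennreal (c \<omega>) \<partial>M) \<le> (\<integral>\<^sup>+\<omega>. ennreal (X \<omega>) * ennreal (indicator B \<omega>) \<partial>M)"
proof -
  interpret finite_measure_subalgebra M F by unfold_locales (fact F)
  let ?g = "\<lambda>\<omega>. ennreal (indicator B \<omega>)"
  have gM: "?g \<in> borel_measurable M" using B by measurable
  have XF: "(\<lambda>\<omega>. ennreal (X \<omega>)) \<in> borel_measurable F" using X by measurable
  have "AE \<omega> in M. ennreal (c \<omega>) \<le> nn_cond_exp M F ?g \<omega>"
    using le_cond_exp
  proof eventually_elim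
    case (elim \<omega>)
    have "real_cond_exp M F (indicator B) \<omega> \<le> enn2real (nn_cond_exp M F ?g \<omega>)"
      unfolding real_cond_exp_def by simp
    then have "c \<omega> \<le> enn2real (nn_cond_exp M F ?g \<omega>)" using elim by linarith
    then have "ennreal (c \<omega>) \<le> ennreal (enn2real (nn_cond_exp M F ?g \<omega>))" by (rule ennreal_leI)
    also have "\<dots> \<le> nn_cond_exp M F ?g \<omega>" by (cases "nn_cond_exp M F ?g \<omega>") auto
    finally show ?case .
  qed
  then have "(\<integral>\<^sup>+\<omega>. ennreal (X \<omega>) * ennreal (c \<omega>) \<partial>M) \<le> (\<integral>\<^sup>+\<omega>. ennreal (X \<omega>) * nn_cond_exp M F ?g \<omega> \<partial>M)"
    by (intro nn_integral_mono_AE) (auto elim!: eventually_mono intro: mult_left_mono)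
  also have "\<dots> = (\<integral>\<^sup>+\<omega>. ennreal (X \<omega>) * ?g \<omega> \<partial>M)"
    by (rule nn_cond_exp_intg[OF XF gM])
  finally show ?thesis .
qed

end

locale online_testing = prob_space M
  for M :: "'a measure" and d :: real and \<theta> :: "nat \<Rightarrow> nat" and p a :: "nat \<Rightarrow> 'a \<Rightarrow> real" +
  assumes d_nonneg: "0 \<le> d"
    and p_measurable: "\<And>t. 1 \<le> t \<Longrightarrow> p t \<in> borel_measurable M"
    and a_measurable_filt: "\<And>t. 1 \<le> t \<Longrightarrow> a t \<in> borel_measurable (filt M p a (t - 1))"
    and a_bounds: "\<And>t \<omega>. 1 \<le> t \<Longrightarrow> \<omega> \<in> space M \<Longrightarrow> 0 \<le> a t \<omega> \<and> a t \<omega> \<le> 1"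
    and super_uniform: "\<And>t U. 1 \<le> t \<Longrightarrow> \<theta> t = 0 \<Longrightarrow> U \<in> borel_measurable (filt M p a (t - 1))
        \<Longrightarrow> (\<forall>\<omega>\<in>space M. 0 \<le> U \<omega> \<and> U \<omega> \<le> 1)
        \<Longrightarrow> AE \<omega> in M. real_cond_exp M (filt M p a (t - 1)) (indicator {\<omega>\<in>space M. p t \<omega> \<le> U \<omega>}) \<omega> \<le> U \<omega>"
begin

abbreviation denom :: "nat \<Rightarrow> 'a \<Rightarrow> real"
  where "denom j \<omega> \<equiv> d * memR d p a (j - 1) \<omega> + 1"

lemma subalgebra_filt: "subalgebra M (filt M p a t)"
  unfolding subalgebra_def using sets_filt_subset[OF p_measurable a_measurable_filt] by simp

lemma measurable_filt_M: "f \<in> borel_measurable (filt M p a t) \<Longrightarrow> f \<in> borel_measurable M"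
  using measurable_from_subalg[OF subalgebra_filt] by blast

lemma a_measurable: "1 \<le> j \<Longrightarrow> a j \<in> borel_measurable M"
  by (rule measurable_filt_M[OF a_measurable_filt])

lemma rej_measurable_M: "1 \<le> j \<Longrightarrow> rej p a j \<in> borel_measurable M"
  by (intro rej_measurable p_measurable a_measurable)

lemma denom_measurable_filt: "(\<lambda>\<omega>. denom j \<omega>) \<in> borel_measurable (filt M p a (j - 1))"
  using memR_measurable_filt by measurable

lemma denom_measurable: "(\<lambda>\<omega>. denom j \<omega>) \<in> borel_measurable M"
  by (rule measurable_filt_M[OF denom_measurable_filt])

lemma denom_ge_1: "1 \<le> denom j \<omega>"
  using mult_nonneg_nonneg[OF d_nonneg memR_nonneg[OF d_nonneg]] by simp

lemma inverse_denom_bounds: "0 \<le> 1 / denom j \<omega> \<and> 1 / denom j \<omega> \<le> 1"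
  using denom_ge_1[of j \<omega>] by (auto simp: divide_simps)

lemma level_div_denom_bounds:
  "1 \<le> j \<Longrightarrow> \<omega> \<in> space M \<Longrightarrow> 0 \<le> a j \<omega> / denom j \<omega> \<and> a j \<omega> / denom j \<omega> \<le> 1"
  using a_bounds[of j \<omega>] denom_ge_1[of j \<omega>] by (auto simp: divide_simps)

lemma rej_div_denom_bounds: "0 \<le> rej p a j \<omega> / denom j \<omega> \<and> rej p a j \<omega> / denom j \<omega> \<le> 1"
  using rej_cases[of p a j \<omega>] denom_ge_1[of j \<omega>] by (auto simp: divide_simps)

lemma integrable_level_div_denom: "1 \<le> j \<Longrightarrow> integrable M (\<lambda>\<omega>. a j \<omega> / denom j \<omega>)"
  using level_div_denom_bounds a_measurable denom_measurable
  by (intro integrable_bounded_nonneg[where B=1] borel_measurable_divide) auto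

lemma integrable_rej_div_denom: "1 \<le> j \<Longrightarrow> integrable M (\<lambda>\<omega>. rej p a j \<omega> / denom j \<omega>)"
  using rej_div_denom_bounds rej_measurable_M denom_measurable
  by (intro integrable_bounded_nonneg[where B=1] borel_measurable_divide) auto

lemma integral_rej_div_denom_le:
  assumes j: "1 \<le> j" "\<theta> j = 0"
  shows "(\<integral>\<omega>. rej p a j \<omega> / denom j \<omega> \<partial>M) \<le> (\<integral>\<omega>. a j \<omega> / denom j \<omega> \<partial>M)"
proof -
  let ?B = "{\<omega>\<in>space M. p j \<omega> \<le> a j \<omega>}"
  have "?B \<in> sets M" using a_measurable p_measurable j by measurable
  moreover have "AE \<omega> in M. real_cond_exp M (filt M p a (j - 1)) (indicator ?B) \<omega> \<le> a j \<omega>"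
    using super_uniform j a_measurable_filt a_bounds by blast
  moreover have "(\<lambda>\<omega>. 1 / denom j \<omega>) \<in> borel_measurable (filt M p a (j - 1))"
    using denom_measurable_filt by measurable
  ultimately have "(\<integral>\<omega>. 1 / denom j \<omega> * indicator ?B \<omega> \<partial>M) \<le> (\<integral>\<omega>. 1 / denom j \<omega> * a j \<omega> \<partial>M)"
    using j a_measurable_filt a_bounds inverse_denom_bounds
    by (intro integral_mult_indicator_le_of_real_cond_exp_le[OF subalgebra_filt]) auto
  moreover have "(\<integral>\<omega>. 1 / denom j \<omega> * indicator ?B \<omega> \<partial>M) = (\<integral>\<omega>. rej p a j \<omega> / denom j \<omega> \<partial>M)"
    by (rule Bochner_Integration.integral_cong) (auto simp: rej_def indicator_def)
  ultimately show ?thesis by simp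
qed

lemma memFDPstar_le_sum_level_div_denom:
  "\<omega> \<in> space M \<Longrightarrow> memFDPstar d \<theta> p a t \<omega> \<le> (\<Sum>j=1..t. a j \<omega> / denom j \<omega>)"
  unfolding memFDPstar_def using level_div_denom_bounds by (intro sum_mono2) (auto simp: H0_def)

lemma memFDPstar_0: "memFDPstar d \<theta> p a 0 \<omega> = 0"
  unfolding memFDPstar_def H0_def by simp

lemma memFDR_le_integral_memFDPstar: "memFDR M d \<theta> p a t \<le> (\<integral>\<omega>. memFDPstar d \<theta> p a t \<omega> \<partial>M)"
proof -
  let ?FDP = "\<lambda>\<omega>. (\<Sum>j\<in>H0 \<theta> t. d ^ (t - j) * rej p a j \<omega>) / memR d p a t \<omega>"
  let ?V = "\<lambda>\<omega>. \<Sum>j\<in>H0 \<theta> t. rej p a j \<omega> / denom j \<omega>"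
  have H0_pos: "\<And>j. j \<in> H0 \<theta> t \<Longrightarrow> 1 \<le> j" and H0_null: "\<And>j. j \<in> H0 \<theta> t \<Longrightarrow> \<theta> j = 0"
    unfolding H0_def by auto
  have V_bounds: "0 \<le> ?V \<omega> \<and> ?V \<omega> \<le> real (card (H0 \<theta> t))" for \<omega>
    using sum_mono[of "H0 \<theta> t" "\<lambda>j. rej p a j \<omega> / denom j \<omega>" "\<lambda>_. 1"] rej_div_denom_bounds
    by (auto intro!: sum_nonneg)
  have FDP_le_V: "?FDP \<omega> \<le> ?V \<omega>" for \<omega>
    by (rule memFDP_le_sum_rej_div[OF d_nonneg])
  have FDP_nonneg: "0 \<le> ?FDP \<omega>" for \<omega>
    using memR_nonneg[OF d_nonneg] d_nonneg by (auto intro!: divide_nonneg_nonneg sum_nonneg simp: rej_nonneg)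
  have memR_M: "memR d p a t \<in> borel_measurable M"
    by (rule measurable_filt_M[OF memR_measurable_filt])
  have int_V: "integrable M ?V"
    using V_bounds H0_pos rej_measurable_M denom_measurable
    by (intro integrable_bounded_nonneg[where B="real (card (H0 \<theta> t))"]) auto
  have int_FDP: "integrable M ?FDP"
  proof (rule integrable_bounded_nonneg[where B="real (card (H0 \<theta> t))"])
    show "?FDP \<in> borel_measurable M"
      using H0_pos rej_measurable_M memR_M by (intro borel_measurable_divide borel_measurable_sum) auto
    show "0 \<le> ?FDP \<omega> \<and> ?FDP \<omega> \<le> real (card (H0 \<theta> t))" for \<omega>
      using FDP_nonneg FDP_le_V V_bounds by (meson order_trans)
  qed
  have "memFDR M d \<theta> p a t = (\<integral>\<omega>. ?FDP \<omega> \<partial>M)" unfolding memFDR_def ..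
  also have "\<dots> \<le> (\<integral>\<omega>. ?V \<omega> \<partial>M)" by (rule integral_mono[OF int_FDP int_V FDP_le_V])
  also have "\<dots> = (\<Sum>j\<in>H0 \<theta> t. (\<integral>\<omega>. rej p a j \<omega> / denom j \<omega> \<partial>M))"
    by (rule Bochner_Integration.integral_sum) (use integrable_rej_div_denom H0_pos in blast)
  also have "\<dots> \<le> (\<Sum>j\<in>H0 \<theta> t. (\<integral>\<omega>. a j \<omega> / denom j \<omega> \<partial>M))"
    by (rule sum_mono) (use integral_rej_div_denom_le H0_pos H0_null in blast)
  also have "\<dots> = (\<integral>\<omega>. memFDPstar d \<theta> p a t \<omega> \<partial>M)"
    unfolding memFDPstar_def
    by (rule Bochner_Integration.integral_sum[symmetric]) (use integrable_level_div_denom H0_pos in blast)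
  finally show ?thesis .
qed

lemma memFDR_le_of_nn_integral_memFDPstar_le:
  assumes "0 \<le> c" "(\<integral>\<^sup>+\<omega>. ennreal (memFDPstar d \<theta> p a t \<omega>) \<partial>M) \<le> ennreal c"
  shows "memFDR M d \<theta> p a t \<le> c"
  using memFDR_le_integral_memFDPstar integral_real_bounded[OF assms] by (rule order_trans)

lemma nn_integral_level_div_denom_le:
  assumes j: "1 \<le> j" "\<theta> j = 0"
    and lam: "lam \<in> borel_measurable (filt M p a (j - 1))" "\<And>\<omega>. \<omega> \<in> space M \<Longrightarrow> 0 < lam \<omega> \<and> lam \<omega> < 1"
  shows "(\<integral>\<^sup>+\<omega>. ennreal (a j \<omega> / denom j \<omega>) \<partial>M)
    \<le> (\<integral>\<^sup>+\<omega>. ennreal (a j \<omega> / denom j \<omega> * (if p j \<omega> > lam \<omega> then 1 else 0) / (1 - lam \<omega>)) \<partial>M)"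
proof -
  let ?B = "{\<omega>\<in>space M. p j \<omega> \<le> lam \<omega>}"
  let ?X = "\<lambda>\<omega>. a j \<omega> / denom j \<omega> / (1 - lam \<omega>)"
  have B: "?B \<in> sets M" using p_measurable[OF j(1)] measurable_filt_M[OF lam(1)] by measurable
  have X: "?X \<in> borel_measurable (filt M p a (j - 1))"
    using a_measurable_filt[OF j(1)] denom_measurable_filt lam(1) by measurable
  have "AE \<omega> in M. real_cond_exp M (filt M p a (j - 1)) (indicator ?B) \<omega> \<le> lam \<omega>"
    using super_uniform j lam by (simp add: less_imp_le)
  then have "AE \<omega> in M. 1 - lam \<omega> \<le> real_cond_exp M (filt M p a (j - 1)) (indicator (space M - ?B)) \<omega>"
    using real_cond_exp_indicator_compl[OF subalgebra_filt B, of "j - 1"] by eventually_elim simp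
  then have "(\<integral>\<^sup>+\<omega>. ennreal (?X \<omega>) * ennreal (1 - lam \<omega>) \<partial>M)
      \<le> (\<integral>\<^sup>+\<omega>. ennreal (?X \<omega>) * ennreal (indicator (space M - ?B) \<omega>) \<partial>M)"
    by (intro nn_integral_mult_le_of_le_real_cond_exp[OF subalgebra_filt X]) (use B in auto)
  moreover have "(\<integral>\<^sup>+\<omega>. ennreal (?X \<omega>) * ennreal (1 - lam \<omega>) \<partial>M) = (\<integral>\<^sup>+\<omega>. ennreal (a j \<omega> / denom j \<omega>) \<partial>M)"
  proof (rule nn_integral_cong)
    fix \<omega> assume \<omega>: "\<omega> \<in> space M"
    have "0 \<le> a j \<omega> / denom j \<omega>" "0 < 1 - lam \<omega>"
      using level_div_denom_bounds[OF j(1) \<omega>] lam(2)[OF \<omega>] by auto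
    then have "0 \<le> ?X \<omega>" "0 \<le> 1 - lam \<omega>" by (rule divide_nonneg_pos, simp)
    then show "ennreal (?X \<omega>) * ennreal (1 - lam \<omega>) = ennreal (a j \<omega> / denom j \<omega>)"
      using lam(2)[OF \<omega>] by (simp add: ennreal_mult[symmetric])
  qed
  moreover have "(\<integral>\<^sup>+\<omega>. ennreal (?X \<omega>) * ennreal (indicator (space M - ?B) \<omega>) \<partial>M)
      = (\<integral>\<^sup>+\<omega>. ennreal (a j \<omega> / denom j \<omega> * (if p j \<omega> > lam \<omega> then 1 else 0) / (1 - lam \<omega>)) \<partial>M)"
    by (rule nn_integral_cong) (auto simp: indicator_def)
  ultimately show ?thesis by simp
qed

lemma nn_integral_memFDPstar_le_memFDPhat:
  assumes lam_measurable: "\<And>j. 1 \<le> j \<Longrightarrow> lam j \<in> borel_measurable (filt M p a (j - 1))"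
    and lam_bounds: "\<And>j \<omega>. 1 \<le> j \<Longrightarrow> \<omega> \<in> space M \<Longrightarrow> 0 < lam j \<omega> \<and> lam j \<omega> < 1"
  shows "(\<integral>\<^sup>+\<omega>. ennreal (memFDPstar d \<theta> p a t \<omega>) \<partial>M) \<le> (\<integral>\<^sup>+\<omega>. ennreal (memFDPhat d p a lam t \<omega>) \<partial>M)"
proof -
  define h where "h j \<omega> = a j \<omega> / denom j \<omega> * (if p j \<omega> > lam j \<omega> then 1 else 0) / (1 - lam j \<omega>)" for j \<omega>
  have h_measurable: "h j \<in> borel_measurable M" if "1 \<le> j" for j
  proof -
    have [measurable]: "p j \<in> borel_measurable M" "a j \<in> borel_measurable M"
      "lam j \<in> borel_measurable M" "memR d p a (j - 1) \<in> borel_measurable M"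
      using that p_measurable a_measurable measurable_filt_M lam_measurable memR_measurable_filt by blast+
    show ?thesis unfolding h_def by measurable
  qed
  have h_nonneg: "0 \<le> h j \<omega>" if "1 \<le> j" "\<omega> \<in> space M" for j \<omega>
    unfolding h_def by (rule divide_nonneg_pos[OF mult_nonneg_nonneg])
      (use level_div_denom_bounds[OF that] lam_bounds[OF that] in auto)
  have H0_pos: "\<And>j. j \<in> H0 \<theta> t \<Longrightarrow> 1 \<le> j" and H0_null: "\<And>j. j \<in> H0 \<theta> t \<Longrightarrow> \<theta> j = 0"
    unfolding H0_def by auto
  have "(\<integral>\<^sup>+\<omega>. ennreal (memFDPstar d \<theta> p a t \<omega>) \<partial>M)
      = (\<integral>\<^sup>+\<omega>. (\<Sum>j\<in>H0 \<theta> t. ennreal (a j \<omega> / denom j \<omega>)) \<partial>M)"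
    unfolding memFDPstar_def using level_div_denom_bounds H0_pos
    by (intro nn_integral_cong) (subst sum_ennreal; auto)
  also have "\<dots> = (\<Sum>j\<in>H0 \<theta> t. (\<integral>\<^sup>+\<omega>. ennreal (a j \<omega> / denom j \<omega>) \<partial>M))"
    using a_measurable denom_measurable H0_pos by (intro nn_integral_sum) auto
  also have "\<dots> \<le> (\<Sum>j\<in>H0 \<theta> t. (\<integral>\<^sup>+\<omega>. ennreal (h j \<omega>) \<partial>M))"
    unfolding h_def using H0_pos H0_null lam_measurable lam_bounds
    by (intro sum_mono nn_integral_level_div_denom_le) auto
  also have "\<dots> \<le> (\<Sum>j\<in>{1..t}. (\<integral>\<^sup>+\<omega>. ennreal (h j \<omega>) \<partial>M))"
    by (rule sum_mono2) (auto simp: H0_def)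
  also have "\<dots> = (\<integral>\<^sup>+\<omega>. (\<Sum>j\<in>{1..t}. ennreal (h j \<omega>)) \<partial>M)"
    using h_measurable by (intro nn_integral_sum[symmetric]) auto
  also have "\<dots> = (\<integral>\<^sup>+\<omega>. ennreal (memFDPhat d p a lam t \<omega>) \<partial>M)"
    unfolding memFDPhat_def h_def[symmetric] using h_nonneg
    by (intro nn_integral_cong) (subst sum_ennreal; auto)
  finally show ?thesis .
qed

lemma memFDR_le_of_AE_memFDPstar_le:
  assumes "0 \<le> c" and le_c: "\<And>t. 1 \<le> t \<Longrightarrow> AE \<omega> in M. memFDPstar d \<theta> p a t \<omega> \<le> c"
  shows "memFDR M d \<theta> p a t \<le> c"
proof (rule memFDR_le_of_nn_integral_memFDPstar_le[OF \<open>0 \<le> c\<close> nn_integral_le_const_of_AE_le])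
  show "AE \<omega> in M. memFDPstar d \<theta> p a t \<omega> \<le> c"
    using le_c \<open>0 \<le> c\<close> memFDPstar_0 by (cases "t = 0") auto
qed

lemma memFDR_le_of_AE_sum_level_div_denom_le:
  assumes "0 \<le> c" and le_c: "\<And>t. 1 \<le> t \<Longrightarrow> AE \<omega> in M. (\<Sum>j=1..t. a j \<omega> / denom j \<omega>) \<le> c"
  shows "memFDR M d \<theta> p a t \<le> c"
proof (rule memFDR_le_of_AE_memFDPstar_le[OF \<open>0 \<le> c\<close>])
  fix t :: nat
  assume "1 \<le> t"
  have bound: "memFDPstar d \<theta> p a t \<omega> \<le> c"
    if "(\<Sum>j=1..t. a j \<omega> / denom j \<omega>) \<le> c" "\<omega> \<in> space M" for \<omega>
    using that memFDPstar_le_sum_level_div_denom[of \<omega> t] by linarith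
  show "AE \<omega> in M. memFDPstar d \<theta> p a t \<omega> \<le> c"
    using le_c[OF \<open>1 \<le> t\<close>] AE_space by eventually_elim (rule bound)
qed

lemma memFDR_le_of_AE_memFDPhat_le:
  assumes lam_measurable: "\<And>j. 1 \<le> j \<Longrightarrow> lam j \<in> borel_measurable (filt M p a (j - 1))"
    and lam_bounds: "\<And>j \<omega>. 1 \<le> j \<Longrightarrow> \<omega> \<in> space M \<Longrightarrow> 0 < lam j \<omega> \<and> lam j \<omega> < 1"
    and "0 \<le> c" and le_c: "\<And>t. 1 \<le> t \<Longrightarrow> AE \<omega> in M. memFDPhat d p a lam t \<omega> \<le> c"
  shows "memFDR M d \<theta> p a t \<le> c"
proof (rule memFDR_le_of_nn_integral_memFDPstar_le[OF \<open>0 \<le> c\<close>])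
  have "AE \<omega> in M. memFDPhat d p a lam t \<omega> \<le> c"
    using le_c \<open>0 \<le> c\<close> by (cases "t = 0") (auto simp: memFDPhat_def)
  then have "(\<integral>\<^sup>+\<omega>. ennreal (memFDPhat d p a lam t \<omega>) \<partial>M) \<le> ennreal c"
    by (rule nn_integral_le_const_of_AE_le)
  with nn_integral_memFDPstar_le_memFDPhat[OF lam_measurable lam_bounds]
  show "(\<integral>\<^sup>+\<omega>. ennreal (memFDPstar d \<theta> p a t \<omega>) \<partial>M) \<le> ennreal c"
    by (rule order_trans)
qed

end

theorem proposition5:
  fixes M :: "'a measure"
    and p a :: "nat \<Rightarrow> 'a \<Rightarrow> real"
    and \<theta> :: "nat \<Rightarrow> nat"
    and alpha d :: real
  assumes "prob_space M"
    and "0 < alpha" and "alpha < 1"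
    and "0 < d" and "d \<le> 1"
    and "\<forall>t. \<theta> t \<in> {0, 1}"
    and "\<forall>t\<ge>1. p t \<in> borel_measurable M"
    and "\<forall>t\<ge>1. \<forall>\<omega>\<in>space M. 0 \<le> p t \<omega> \<and> p t \<omega> \<le> 1"
    and "\<forall>t\<ge>1. a t \<in> borel_measurable (filt M p a (t - 1))"
    and "\<forall>t\<ge>1. \<forall>\<omega>\<in>space M. 0 \<le> a t \<omega> \<and> a t \<omega> \<le> 1"
    and superunif: "\<forall>t\<ge>1. \<theta> t = 0 \<longrightarrow>
          (\<forall>U. U \<in> borel_measurable (filt M p a (t - 1))
               \<and> (\<forall>\<omega>\<in>space M. 0 \<le> U \<omega> \<and> U \<omega> \<le> 1) \<longrightarrow>
             (AE \<omega> in M. real_cond_exp M (filt M p a (t - 1))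
                  (indicator {\<omega>\<in>space M. p t \<omega> \<le> U \<omega>}) \<omega> \<le> U \<omega>))"
  shows "((\<forall>t\<ge>1. AE \<omega> in M. (\<Sum>j=1..t. a j \<omega> / (d * memR d p a (j - 1) \<omega> + 1)) \<le> alpha)
            \<longrightarrow> (\<forall>t. memFDR M d \<theta> p a t \<le> alpha))
       \<and> (\<forall>lam :: nat \<Rightarrow> 'a \<Rightarrow> real.
            (\<forall>t\<ge>1. lam t \<in> borel_measurable (filt M p a (t - 1))
                  \<and> (\<forall>\<omega>\<in>space M. 0 < lam t \<omega> \<and> lam t \<omega> < 1)) \<longrightarrow>
            (\<forall>t. (\<integral>\<^sup>+\<omega>. ennreal (memFDPhat d p a lam t \<omega>) \<partial>M)
                  \<ge> (\<integral>\<^sup>+\<omega>. ennreal (memFDPstar d \<theta> p a t \<omega>) \<partial>M))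
          \<and> ((\<forall>t\<ge>1. AE \<omega> in M. memFDPhat d p a lam t \<omega> \<le> alpha)
               \<longrightarrow> (\<forall>t. memFDR M d \<theta> p a t \<le> alpha)))"
proof -
  interpret online_testing M d \<theta> p a
    by (intro online_testing.intro[OF assms(1)] online_testing_axioms.intro)
      (use assms(4,7,9,10) superunif in \<open>simp_all add: less_imp_le\<close>)
  have alpha: "0 \<le> alpha" using assms(2) by simp
  show ?thesis
  proof (intro conjI allI impI)
    fix t
    assume "\<forall>t\<ge>1. AE \<omega> in M. (\<Sum>j=1..t. a j \<omega> / denom j \<omega>) \<le> alpha"
    then show "memFDR M d \<theta> p a t \<le> alpha"
      by (intro memFDR_le_of_AE_sum_level_div_denom_le alpha) auto
  next
    fix lam :: "nat \<Rightarrow> 'a \<Rightarrow> real" and t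
    assume "\<forall>t\<ge>1. lam t \<in> borel_measurable (filt M p a (t - 1)) \<and> (\<forall>\<omega>\<in>space M. 0 < lam t \<omega> \<and> lam t \<omega> < 1)"
    then show "(\<integral>\<^sup>+\<omega>. ennreal (memFDPstar d \<theta> p a t \<omega>) \<partial>M) \<le> (\<integral>\<^sup>+\<omega>. ennreal (memFDPhat d p a lam t \<omega>) \<partial>M)"
      by (intro nn_integral_memFDPstar_le_memFDPhat) auto
  next
    fix lam :: "nat \<Rightarrow> 'a \<Rightarrow> real" and t
    assume "\<forall>t\<ge>1. lam t \<in> borel_measurable (filt M p a (t - 1)) \<and> (\<forall>\<omega>\<in>space M. 0 < lam t \<omega> \<and> lam t \<omega> < 1)"
      and "\<forall>t\<ge>1. AE \<omega> in M. memFDPhat d p a lam t \<omega> \<le> alpha"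
    then show "memFDR M d \<theta> p a t \<le> alpha"
      by (intro memFDR_le_of_AE_memFDPhat_le alpha) auto
  qed
qed

end
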